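(* Let $B$ be a symmetric positive definite $3\times3$ matrix and put $A=A(B)$, $\mathbb A=\mathbb A(B)$, $\mathbb C=\mathbb C(B)$. Then for every real $3\times3$ matrix $M$, $$\mathbb C:(B\cdot M+M^T\cdot B)=(\operatorname{tr}M)\,A+M\cdot A+A\cdot M^T-2\,\mathbb A:M.$$
   Context: For a symmetric positive definite matrix $B$, $$A(B)=\tfrac12\int_0^\infty \frac{(B+sI)^{-1}\,ds}{\sqrt{\det(B+sI)}},\quad \mathbb A(B)=\tfrac34\int_0^\infty\frac{s\,\mathcal S\big((B+sI)^{-1}\otimes(B+sI)^{-1}\big)\,ds}{\sqrt{\det(B+sI)}},\quad \mathbb C(B)=\tfrac34\int_0^\infty\frac{\mathcal S\big((B+sI)^{-1}\otimes(B+sI)^{-1}\big)\,ds}{\sqrt{\det(B+sI)}},$$ where $\mathcal S(\mathbb T)_{ijkl}$ is the average of $\mathbb T_{mnpq}$ over all permutations $(m,n,p,q)$ of $(i,j,k,l)$, and $(\mathbb T:M)_{ij}=\sum_{k,l}\mathbb T_{ijkl}M_{kl}$. *)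

theory Defs
  imports "HOL-Analysis.Analysis"
begin

type_synonym mat3 = "real^3^3"
type_synonym tensor4 = "3 \<Rightarrow> 3 \<Rightarrow> 3 \<Rightarrow> 3 \<Rightarrow> real"

definition sym_posdef :: "mat3 \<Rightarrow> bool" where
  "sym_posdef B \<longleftrightarrow> transpose B = B \<and> (\<forall>x. x \<noteq> 0 \<longrightarrow> x \<bullet> (B *v x) > 0)"

definition resolv :: "mat3 \<Rightarrow> real \<Rightarrow> mat3" where
  "resolv B s = matrix_inv (B + s *\<^sub>R mat 1)"

definition tprod :: "mat3 \<Rightarrow> mat3 \<Rightarrow> tensor4" where
  "tprod P Q i j k l = P $ i $ j * Q $ k $ l"

definition symm :: "tensor4 \<Rightarrow> tensor4" where
  "symm T i j k l = (let x = (\<lambda>n::nat. [i, j, k, l] ! n) in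
     (\<Sum>\<sigma>\<in>{\<sigma>. \<sigma> permutes {0..<4::nat}}. T (x (\<sigma> 0)) (x (\<sigma> 1)) (x (\<sigma> 2)) (x (\<sigma> 3))) / 24)"

definition contr :: "tensor4 \<Rightarrow> mat3 \<Rightarrow> mat3" where
  "contr T M = (\<chi> i j. \<Sum>k\<in>UNIV. \<Sum>l\<in>UNIV. T i j k l * M $ k $ l)"

definition Amat :: "mat3 \<Rightarrow> mat3" where
  "Amat B = (1/2) *\<^sub>R integral {0..} (\<lambda>s. (1 / sqrt (det (B + s *\<^sub>R mat 1))) *\<^sub>R resolv B s)"

definition AA :: "mat3 \<Rightarrow> tensor4" where
  "AA B i j k l = (3/4) * integral {0..}
     (\<lambda>s. s * symm (tprod (resolv B s) (resolv B s)) i j k l / sqrt (det (B + s *\<^sub>R mat 1)))"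

definition CC :: "mat3 \<Rightarrow> tensor4" where
  "CC B i j k l = (3/4) * integral {0..}
     (\<lambda>s. symm (tprod (resolv B s) (resolv B s)) i j k l / sqrt (det (B + s *\<^sub>R mat 1)))"

end

theory Submission
  imports Defs "HOL-Combinatorics.Permutations"
begin

text \<open>
  For s \<ge> 0 the resolvent R = (B + sI)\<inverse> is symmetric and satisfies RB = BR = I - sR.
  Since the symmetrised tensor acts by \<S>(R \<otimes> R) : X = (tr(RX) R + RXR + RX^T R)/3,
  substituting X = BM + M^T B gives, for every s,
  (3/4) \<S>(R \<otimes> R) : (BM + M^T B) = (tr M R + MR + RM^T)/2 - (3/2) s \<S>(R \<otimes> R) : M.
  Dividing by sqrt (det (B + sI)) and integrating over s \<ge> 0 gives the theorem; all integrals
  converge because the entries of R decay like 1/(1 + s) while det (B + sI) grows like (1 + s)^3.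
\<close>

section \<open>Matrix algebra and symmetrised tensors\<close>

lemma matrix_diff_ldistrib: "(A::'a::ring_1^'n^'m) ** (B - C) = A ** B - A ** C"
  by (simp add: matrix_matrix_mult_def vec_eq_iff sum_subtractf right_diff_distrib)

lemma matrix_add_rdistrib: "((A::'a::semiring_1^'n^'m) + B) ** C = A ** C + B ** C"
  by (simp add: matrix_matrix_mult_def vec_eq_iff sum.distrib distrib_right)

lemma matrix_diff_rdistrib: "((A::'a::ring_1^'n^'m) - B) ** C = A ** C - B ** C"
  by (simp add: matrix_matrix_mult_def vec_eq_iff sum_subtractf left_diff_distrib)

lemma trace_scaleR: "trace (c *\<^sub>R (A::real^'n^'n)) = c * trace A"
  by (simp add: trace_def sum_distrib_left)

lemma trace_transpose: "trace (transpose A) = trace A"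
  by (simp add: trace_def transpose_def)

lemma transpose_add: "transpose (A + B) = transpose A + transpose (B::'a::semiring_1^'n^'m)"
  by (simp add: transpose_def vec_eq_iff)

lemma symmetric_matrix_nth: "transpose A = A \<Longrightarrow> A $ i $ j = A $ j $ i"
  by (metis transpose_def vec_lambda_beta)

lemma symm_explicit: "symm T i j k l = (T i j k l + T i j l k +
     (T i k j l + T i k l j + (T i l k j + T i l j k)) +
     (T j i k l + T j i l k +
      (T j k i l + T j k l i + (T j l k i + T j l i k)) +
      (T k j i l + T k j l i +
       (T k i j l + T k i l j + (T k l i j + T k l j i)) +
       (T l j k i + T l j i k +
        (T l k j i + T l k i j + (T l i k j + T l i j k)))))) / 24"
proof -
  have "{0..<4::nat} = {0, 1, 2, 3}" by auto
  then show ?thesis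
    unfolding symm_def Let_def
    by (simp add: sum_over_permutations_insert Transposition.transpose_def)
qed

lemma symm_tprod_symmetric:
  assumes "transpose R = R"
  shows "symm (tprod R R) i j k l = (R$i$j * R$k$l + R$i$k * R$j$l + R$i$l * R$j$k) / 3"
proof -
  note sym = symmetric_matrix_nth[OF assms]
  show ?thesis
    unfolding symm_explicit tprod_def
    by (simp add: sym[of j i] sym[of k i] sym[of l i] sym[of k j] sym[of l j] sym[of l k] divide_simps)
qed

lemma contr_symm_tprod_symmetric:
  assumes "transpose R = R"
  shows "contr (symm (tprod R R)) X
    = (1/3) *\<^sub>R (trace (R ** X) *\<^sub>R R + R ** X ** R + R ** transpose X ** R)"
proof -
  note sym = symmetric_matrix_nth[OF assms]
  show ?thesis
    unfolding contr_def symm_tprod_symmetric[OF assms]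
    by (simp add: vec_eq_iff forall_3 sum_3 matrix_matrix_mult_def trace_def transpose_def
        sym[of 2 1] sym[of 3 1] sym[of 3 2] algebra_simps add_divide_distrib)
qed

lemma contr_scale: "contr (\<lambda>i j k l. c * T i j k l) X = c *\<^sub>R contr T X"
  by (simp add: contr_def vec_eq_iff sum_distrib_left mult.assoc)

lemma contr_symm_tprod_inverse_shift:
  fixes B M R :: mat3
  assumes RP: "R ** (B + s *\<^sub>R mat 1) = mat 1" and PR: "(B + s *\<^sub>R mat 1) ** R = mat 1"
    and tR: "transpose R = R" and tB: "transpose B = B"
  shows "(3/4) *\<^sub>R contr (symm (tprod R R)) (B ** M + transpose M ** B)
    = (1/2) *\<^sub>R (trace M *\<^sub>R R + M ** R + R ** transpose M)
      - (3/2 * s) *\<^sub>R contr (symm (tprod R R)) M"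
proof -
  define X where "X = B ** M + transpose M ** B"
  have RB: "R ** B = mat 1 - s *\<^sub>R R"
    using RP by (simp add: matrix_add_ldistrib matrix_scalar_ac algebra_simps)
  have BR: "B ** R = mat 1 - s *\<^sub>R R"
    using PR by (simp add: matrix_add_rdistrib flip: scalar_matrix_assoc) (simp add: algebra_simps)
  have tX: "transpose X = X"
    unfolding X_def transpose_add matrix_transpose_mul tB transpose_transpose by (simp add: add.commute)
  have RXR: "R ** X ** R
      = M ** R - s *\<^sub>R (R ** M ** R) + R ** transpose M - s *\<^sub>R (R ** transpose M ** R)"
  proof -
    have "R ** X ** R = (R ** B) ** M ** R + R ** transpose M ** (B ** R)"
      unfolding X_def by (simp add: matrix_add_ldistrib matrix_add_rdistrib matrix_mul_assoc)
    then show ?thesis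
      unfolding RB BR
      by (simp add: matrix_diff_ldistrib matrix_diff_rdistrib matrix_scalar_ac matrix_mul_assoc
          flip: scalar_matrix_assoc)
  qed
  have trRX: "trace (R ** X) = 2 * trace M - 2 * s * trace (R ** M)"
  proof -
    have "trace (R ** X) = trace ((R ** B) ** M) + trace (transpose M ** (B ** R))"
      unfolding X_def matrix_add_ldistrib trace_add by (metis trace_mul_sym matrix_mul_assoc)
    also have "\<dots> = trace M - s * trace (R ** M) + trace (transpose M) - s * trace (transpose M ** R)"
      unfolding RB BR
      by (simp add: matrix_diff_ldistrib matrix_diff_rdistrib matrix_scalar_ac trace_sub trace_scaleR
          flip: scalar_matrix_assoc)
    also have "trace (transpose M ** R) = trace (R ** M)"
      by (metis matrix_transpose_mul tR trace_transpose)
    finally show ?thesis by (simp add: trace_transpose)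
  qed
  show ?thesis
    unfolding X_def[symmetric] contr_symm_tprod_symmetric[OF tR] tX RXR trRX
    by (simp add: vec_eq_iff algebra_simps)
qed

section \<open>Positive definite 3 \<times> 3 matrices and their resolvent\<close>

definition next3 :: "3 \<Rightarrow> 3" where
  "next3 i = (if i = 1 then 2 else if i = 2 then 3 else 1)"

text \<open>Entry (i, j) is the cofactor of (j, i); taking the remaining indices in cyclic order
  makes the cofactor signs automatic.\<close>
definition adjugate3 :: "mat3 \<Rightarrow> mat3" where
  "adjugate3 P = (\<chi> i j. P$(next3 j)$(next3 i) * P$(next3 (next3 j))$(next3 (next3 i))
                       - P$(next3 j)$(next3 (next3 i)) * P$(next3 (next3 j))$(next3 i))"

lemma matrix_mul_adjugate3: "P ** adjugate3 P = det P *\<^sub>R mat 1"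
  unfolding matrix_matrix_mult_def adjugate3_def
  by (simp add: vec_eq_iff forall_3 sum_3 det_3 next3_def mat_def) algebra

lemma adjugate3_mul_matrix: "adjugate3 P ** P = det P *\<^sub>R mat 1"
  unfolding matrix_matrix_mult_def adjugate3_def
  by (simp add: vec_eq_iff forall_3 sum_3 det_3 next3_def mat_def) algebra

lemma matrix_inv_unique:
  fixes A :: "'a::semiring_1^'n^'m" and X :: "'a^'m^'n"
  assumes "A ** X = mat 1" "X ** A = mat 1"
  shows "matrix_inv A = X"
proof -
  define Y where "Y = matrix_inv A"
  have "A ** Y = mat 1 \<and> Y ** A = mat 1"
    unfolding Y_def matrix_inv_def
    using someI[of "\<lambda>A'. A ** A' = mat 1 \<and> A' ** A = mat 1" X] assms by simp
  have "Y = Y ** (A ** X)"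
    using assms by simp
  also have "\<dots> = (Y ** A) ** X"
    by (simp add: matrix_mul_assoc)
  also have "\<dots> = X"
    using \<open>A ** Y = mat 1 \<and> Y ** A = mat 1\<close> by simp
  finally show ?thesis
    by (simp add: Y_def)
qed

lemma det_add_scaleR_mat1:
  "det (B + s *\<^sub>R mat 1 :: mat3) = s^3 + (B$1$1 + B$2$2 + B$3$3) * s^2
     + ((B$1$1*B$2$2 - B$1$2*B$2$1) + (B$1$1*B$3$3 - B$1$3*B$3$1) + (B$2$2*B$3$3 - B$2$3*B$3$2)) * s
     + det B"
  by (simp add: det_3 mat_def power2_eq_square power3_eq_cube algebra_simps)

lemma quadratic_form_vector3:
  fixes B :: mat3
  shows "vector [a, b, c] \<bullet> (B *v vector [a, b, c]) =
     a * (B$1$1 * a + B$1$2 * b + B$1$3 * c) + b * (B$2$1 * a + B$2$2 * b + B$2$3 * c)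
     + c * (B$3$1 * a + B$3$2 * b + B$3$3 * c)"
  by (simp add: inner_vec_def matrix_vector_mult_def sum_3)

lemma sym_posdef_principal_minors_pos:
  assumes "sym_posdef B"
  shows "B$1$1 > 0" "B$2$2 > 0" "B$3$3 > 0"
    "B$1$1*B$2$2 - B$1$2*B$2$1 > 0" "B$1$1*B$3$3 - B$1$3*B$3$1 > 0" "B$2$2*B$3$3 - B$2$3*B$3$2 > 0"
    "det B > 0"
proof -
  have sym: "B$a$b = B$b$a" for a b
    using assms by (simp add: sym_posdef_def symmetric_matrix_nth)
  have pos: "vector [a, b, c] \<bullet> (B *v vector [a, b, c]) > 0" if "a \<noteq> 0 \<or> b \<noteq> 0 \<or> c \<noteq> 0" for a b c
    using assms that unfolding sym_posdef_def by (auto simp: vec_eq_iff forall_3)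
  show b1: "B$1$1 > 0" using pos[of 1 0 0] by (simp add: quadratic_form_vector3)
  show b2: "B$2$2 > 0" using pos[of 0 1 0] by (simp add: quadratic_form_vector3)
  show "B$3$3 > 0" using pos[of 0 0 1] by (simp add: quadratic_form_vector3)
  have "B$1$1 * (B$1$1*B$2$2 - B$1$2*B$2$1) > 0"
    using pos[of "B$1$2" "-B$1$1" 0] b1 by (simp add: quadratic_form_vector3 sym[of 2 1] algebra_simps)
  then show m12: "B$1$1*B$2$2 - B$1$2*B$2$1 > 0" using b1 by (simp add: zero_less_mult_iff)
  have "B$1$1 * (B$1$1*B$3$3 - B$1$3*B$3$1) > 0"
    using pos[of "B$1$3" 0 "-B$1$1"] b1 by (simp add: quadratic_form_vector3 sym[of 3 1] algebra_simps)
  then show "B$1$1*B$3$3 - B$1$3*B$3$1 > 0" using b1 by (simp add: zero_less_mult_iff)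
  have "B$2$2 * (B$2$2*B$3$3 - B$2$3*B$3$2) > 0"
    using pos[of 0 "B$2$3" "-B$2$2"] b2 by (simp add: quadratic_form_vector3 sym[of 3 2] algebra_simps)
  then show "B$2$2*B$3$3 - B$2$3*B$3$2 > 0" using b2 by (simp add: zero_less_mult_iff)
  \<comment> \<open>The third column x of adj B satisfies B x = det B e3, so x \<bullet> B x = det B * x3.\<close>
  let ?x = "vector [adjugate3 B$1$3, adjugate3 B$2$3, adjugate3 B$3$3] :: real^3"
  have "?x \<bullet> (B *v ?x) = det B * (B$1$1*B$2$2 - B$1$2*B$2$1)"
    unfolding quadratic_form_vector3 by (simp add: adjugate3_def next3_def det_3) algebra
  moreover have "adjugate3 B$3$3 = B$1$1*B$2$2 - B$1$2*B$2$1"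
    by (simp add: adjugate3_def next3_def)
  ultimately have "det B * (B$1$1*B$2$2 - B$1$2*B$2$1) > 0"
    using pos[of "adjugate3 B$1$3" "adjugate3 B$2$3" "adjugate3 B$3$3"] m12 by auto
  then show "det B > 0" using m12 by (simp add: zero_less_mult_iff)
qed

lemma det_shift_growth:
  assumes "sym_posdef B"
  obtains c where "c > 0" "\<And>s. s \<ge> 0 \<Longrightarrow> c * (1 + s)^3 \<le> det (B + s *\<^sub>R mat 1)"
proof
  note minors = sym_posdef_principal_minors_pos[OF assms]
  show "min (det B) 1 / 4 > 0" using minors by simp
  fix s :: real assume "s \<ge> 0"
  have "(1 + s)^3 \<le> 4 * (1 + s^3)"
  proof -
    have "4 * (1 + s^3) - (1 + s)^3 = 3 * (1 - s)^2 * (1 + s)"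
      by (simp add: power2_eq_square power3_eq_cube algebra_simps)
    with \<open>s \<ge> 0\<close> show ?thesis by (smt (verit) zero_le_mult_iff zero_le_power2)
  qed
  then have "min (det B) 1 / 4 * (1 + s)^3 \<le> min (det B) 1 * (1 + s^3)"
    using minors(7) by (simp add: mult_left_mono)
  also have "\<dots> \<le> s^3 + det B"
    using \<open>s \<ge> 0\<close> minors(7) by (auto simp: min_def algebra_simps intro!: mult_left_le_one_le)
  also have "\<dots> \<le> det (B + s *\<^sub>R mat 1)"
    unfolding det_add_scaleR_mat1 using minors \<open>s \<ge> 0\<close>
    by (intro add_mono order_refl) (auto intro!: add_nonneg_nonneg mult_nonneg_nonneg)
  finally show "min (det B) 1 / 4 * (1 + s)^3 \<le> det (B + s *\<^sub>R mat 1)" .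
qed

lemma det_shift_pos: "sym_posdef B \<Longrightarrow> s \<ge> 0 \<Longrightarrow> det (B + s *\<^sub>R mat 1) > 0"
  by (smt (verit, best) det_shift_growth mult_pos_pos zero_less_power)

lemma resolv_eq_adjugate:
  assumes "det (B + s *\<^sub>R mat 1) \<noteq> 0"
  shows "resolv B s = (1 / det (B + s *\<^sub>R mat 1)) *\<^sub>R adjugate3 (B + s *\<^sub>R mat 1)"
  unfolding resolv_def using assms
  by (intro matrix_inv_unique)
     (simp_all add: matrix_scalar_ac matrix_mul_adjugate3 adjugate3_mul_matrix flip: scalar_matrix_assoc)

lemma
  assumes "det (B + s *\<^sub>R mat 1) \<noteq> 0"
  shows resolv_mul_shift: "resolv B s ** (B + s *\<^sub>R mat 1) = mat 1"
    and shift_mul_resolv: "(B + s *\<^sub>R mat 1) ** resolv B s = mat 1"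
  unfolding resolv_eq_adjugate[OF assms] using assms
  by (simp_all add: matrix_scalar_ac matrix_mul_adjugate3 adjugate3_mul_matrix flip: scalar_matrix_assoc)

lemma transpose_resolv:
  assumes "transpose B = B" "det (B + s *\<^sub>R mat 1) \<noteq> 0"
  shows "transpose (resolv B s) = resolv B s"
proof -
  have "transpose (B + s *\<^sub>R mat 1) = B + s *\<^sub>R mat 1"
    using assms(1) by (simp add: transpose_add transpose_def vec_eq_iff mat_def)
  then have "transpose (resolv B s) ** (B + s *\<^sub>R mat 1) = mat 1"
    using arg_cong[OF shift_mul_resolv[OF assms(2)], of transpose] by (simp add: matrix_transpose_mul)
  have "transpose (resolv B s) = transpose (resolv B s) ** ((B + s *\<^sub>R mat 1) ** resolv B s)"
    using shift_mul_resolv[OF assms(2)] by simp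
  also have "\<dots> = (transpose (resolv B s) ** (B + s *\<^sub>R mat 1)) ** resolv B s"
    by (simp add: matrix_mul_assoc)
  finally show ?thesis
    using \<open>transpose (resolv B s) ** (B + s *\<^sub>R mat 1) = mat 1\<close> by simp
qed

section \<open>Decay on the half-line and integrability\<close>

lemma has_integral_inverse_square_shift: "((\<lambda>s::real. 1 / (1 + s)^2) has_integral 1) {0..}"
proof (intro has_integral_to_inf integrable_continuous_interval continuous_intros)
  have "((\<lambda>s::real. 1 / (1 + s)^2) has_integral (- 1 / (1 + y) - (- 1 / (1 + 0)))) {0..y}"
    if "y \<ge> 0" for y :: real
    using that
    by (intro fundamental_theorem_of_calculus)
       (auto intro!: derivative_eq_intros simp flip: has_real_derivative_iff_has_vector_derivative
             simp: power2_eq_square field_simps)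
  then have "\<forall>\<^sub>F y in at_top. integral {0..y} (\<lambda>s::real. 1 / (1 + s)^2) = 1 - 1 / (1 + y)"
    by (auto intro: eventually_at_top_linorderI integral_unique)
  moreover have "((\<lambda>y::real. 1 - 1 / (1 + y)) \<longlongrightarrow> 1) at_top"
    by real_asymp
  ultimately show "((\<lambda>y. integral {0..y} (\<lambda>s::real. 1 / (1 + s)^2)) \<longlongrightarrow> 1) at_top"
    by (simp add: filterlim_cong)
qed auto

definition decays :: "nat \<Rightarrow> (real \<Rightarrow> real) \<Rightarrow> bool" where
  "decays n f \<longleftrightarrow> (\<exists>C. \<forall>s\<ge>0. \<bar>f s\<bar> \<le> C / (1 + s) ^ n)"

lemma decaysI: "(\<And>s. s \<ge> 0 \<Longrightarrow> \<bar>f s\<bar> \<le> C / (1 + s) ^ n) \<Longrightarrow> decays n f"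
  unfolding decays_def by blast

lemma decaysE:
  assumes "decays n f"
  obtains C where "C \<ge> 0" "\<And>s. s \<ge> 0 \<Longrightarrow> \<bar>f s\<bar> \<le> C / (1 + s) ^ n"
proof -
  obtain C where C: "\<And>s. s \<ge> 0 \<Longrightarrow> \<bar>f s\<bar> \<le> C / (1 + s) ^ n"
    using assms unfolding decays_def by blast
  have "C \<ge> 0" using C[of 0] by simp
  with C show thesis by (rule that[rotated])
qed

lemma decays_add: "decays n f \<Longrightarrow> decays n g \<Longrightarrow> decays n (\<lambda>s. f s + g s)"
proof (elim decaysE)
  fix C D assume C: "\<And>s. s \<ge> 0 \<Longrightarrow> \<bar>f s\<bar> \<le> C / (1 + s) ^ n"
    and D: "\<And>s. s \<ge> 0 \<Longrightarrow> \<bar>g s\<bar> \<le> D / (1 + s) ^ n"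
  show "decays n (\<lambda>s. f s + g s)"
  proof (rule decaysI)
    fix s :: real assume "s \<ge> 0"
    have "\<bar>f s + g s\<bar> \<le> C / (1 + s) ^ n + D / (1 + s) ^ n"
      using C[OF \<open>s \<ge> 0\<close>] D[OF \<open>s \<ge> 0\<close>] by linarith
    then show "\<bar>f s + g s\<bar> \<le> (C + D) / (1 + s) ^ n"
      by (simp add: add_divide_distrib)
  qed
qed

lemma decays_mult: "decays m f \<Longrightarrow> decays n g \<Longrightarrow> decays (m + n) (\<lambda>s. f s * g s)"
proof (elim decaysE)
  fix C D assume C: "\<And>s. s \<ge> 0 \<Longrightarrow> \<bar>f s\<bar> \<le> C / (1 + s) ^ m"
    and D: "\<And>s. s \<ge> 0 \<Longrightarrow> \<bar>g s\<bar> \<le> D / (1 + s) ^ n"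
  show "decays (m + n) (\<lambda>s. f s * g s)"
  proof (rule decaysI)
    fix s :: real assume "s \<ge> 0"
    have "\<bar>f s * g s\<bar> \<le> C / (1 + s) ^ m * (D / (1 + s) ^ n)"
      unfolding abs_mult using C[OF \<open>s \<ge> 0\<close>] D[OF \<open>s \<ge> 0\<close>]
      by (intro mult_mono) (auto intro: order_trans[OF abs_ge_zero])
    then show "\<bar>f s * g s\<bar> \<le> C * D / (1 + s) ^ (m + n)"
      by (simp add: power_add)
  qed
qed

lemma decays_divide_const: "decays n f \<Longrightarrow> decays n (\<lambda>s. f s / c)"
proof (elim decaysE)
  fix C assume C: "\<And>s. s \<ge> 0 \<Longrightarrow> \<bar>f s\<bar> \<le> C / (1 + s) ^ n"
  show "decays n (\<lambda>s. f s / c)"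
  proof (rule decaysI)
    fix s :: real assume "s \<ge> 0"
    have "\<bar>f s\<bar> / \<bar>c\<bar> \<le> C / (1 + s) ^ n / \<bar>c\<bar>"
      using C[OF \<open>s \<ge> 0\<close>] by (rule divide_right_mono) simp
    then show "\<bar>f s / c\<bar> \<le> C / \<bar>c\<bar> / (1 + s) ^ n"
      by (simp add: abs_divide divide_divide_eq_left mult.commute)
  qed
qed

lemma decays_mono: "m \<le> n \<Longrightarrow> decays n f \<Longrightarrow> decays m f"
proof (elim decaysE)
  fix C assume "m \<le> n" "C \<ge> 0" and C: "\<And>s. s \<ge> 0 \<Longrightarrow> \<bar>f s\<bar> \<le> C / (1 + s) ^ n"
  show "decays m f"
  proof (rule decaysI)
    fix s :: real assume "s \<ge> 0"
    have "C / (1 + s) ^ n \<le> C / (1 + s) ^ m"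
      using \<open>s \<ge> 0\<close> \<open>m \<le> n\<close> \<open>C \<ge> 0\<close> by (intro divide_left_mono power_increasing) auto
    with C[OF \<open>s \<ge> 0\<close>] show "\<bar>f s\<bar> \<le> C / (1 + s) ^ m" by linarith
  qed
qed

lemma decays_mult_ident: "decays (Suc n) f \<Longrightarrow> decays n (\<lambda>s. s * f s)"
proof (elim decaysE)
  fix C assume "C \<ge> 0" and C: "\<And>s. s \<ge> 0 \<Longrightarrow> \<bar>f s\<bar> \<le> C / (1 + s) ^ Suc n"
  show "decays n (\<lambda>s. s * f s)"
  proof (rule decaysI)
    fix s :: real assume "s \<ge> 0"
    have "\<bar>s * f s\<bar> \<le> (1 + s) * (C / (1 + s) ^ Suc n)"
      unfolding abs_mult using C[OF \<open>s \<ge> 0\<close>] \<open>s \<ge> 0\<close> by (intro mult_mono) auto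
    also have "\<dots> = C / (1 + s) ^ n"
      using \<open>s \<ge> 0\<close> by (simp add: divide_simps)
    finally show "\<bar>s * f s\<bar> \<le> C / (1 + s) ^ n" .
  qed
qed

lemma integrable_on_decays:
  assumes "continuous_on {0..} f" "decays 2 f"
  shows "f integrable_on {0..}"
proof -
  from assms(2) obtain C where C: "\<forall>s\<ge>0. \<bar>f s\<bar> \<le> C / (1 + s)^2"
    unfolding decays_def ..
  have int: "(\<lambda>s. C / (1 + s)^2) integrable_on {0..}"
    using integrable_on_cmult_left[OF has_integral_integrable[OF has_integral_inverse_square_shift], of C]
    by simp
  have meas: "f \<in> borel_measurable (lebesgue_on {0..})"
    using assms(1) by (rule continuous_imp_measurable_on_sets_lebesgue) simp
  show ?thesis
    using C by (intro measurable_bounded_by_integrable_imp_integrable_real[OF meas int]) auto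
qed

lemma shift_entry_bound:
  fixes B :: mat3
  assumes "s \<ge> 0"
  shows "\<bar>(B + s *\<^sub>R mat 1) $ i $ j\<bar> \<le> (norm B + norm (mat 1 :: mat3)) * (1 + s)"
proof -
  have "\<bar>(B + s *\<^sub>R mat 1) $ i $ j\<bar> \<le> norm (B + s *\<^sub>R mat 1)"
    by (rule order_trans[OF component_le_norm_cart Finite_Cartesian_Product.norm_nth_le])
  also have "\<dots> \<le> norm B + s * norm (mat 1 :: mat3)"
    using assms norm_triangle_ineq[of B "s *\<^sub>R mat 1"] by simp
  also have "\<dots> \<le> (norm B + norm (mat 1 :: mat3)) * (1 + s)"
    using assms by (simp add: algebra_simps)
  finally show ?thesis .
qed

lemma adjugate3_entry_bound:
  assumes "\<And>i j. \<bar>P $ i $ j\<bar> \<le> u"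
  shows "\<bar>adjugate3 P $ i $ j\<bar> \<le> 2 * u^2"
proof -
  have prod: "\<bar>P $ a $ b * P $ c $ d\<bar> \<le> u^2" for a b c d
    unfolding abs_mult power2_eq_square
    using assms by (intro mult_mono) (auto intro: order_trans[OF abs_ge_zero])
  show ?thesis
    unfolding adjugate3_def vec_lambda_beta
    by (rule order_trans[OF abs_triangle_ineq4], rule order_trans[OF add_mono[OF prod prod]]) simp
qed

lemma decays_resolv_entry:
  assumes "sym_posdef B"
  shows "decays 1 (\<lambda>s. resolv B s $ i $ j)"
proof -
  obtain c where "c > 0" and c: "\<And>s. s \<ge> 0 \<Longrightarrow> c * (1 + s)^3 \<le> det (B + s *\<^sub>R mat 1)"
    using det_shift_growth[OF assms] by blast
  define K where "K = norm B + norm (mat 1 :: mat3)"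
  show ?thesis
  proof (rule decaysI)
    fix s :: real assume "s \<ge> 0"
    have "\<bar>resolv B s $ i $ j\<bar> = \<bar>adjugate3 (B + s *\<^sub>R mat 1) $ i $ j\<bar> / det (B + s *\<^sub>R mat 1)"
      using det_shift_pos[OF assms \<open>s \<ge> 0\<close>] by (simp add: resolv_eq_adjugate)
    also have "\<dots> \<le> 2 * (K * (1 + s))^2 / (c * (1 + s)^3)"
      using adjugate3_entry_bound[OF shift_entry_bound[where B = B, OF \<open>s \<ge> 0\<close>], folded K_def]
        c[OF \<open>s \<ge> 0\<close>] \<open>c > 0\<close> \<open>s \<ge> 0\<close>
      by (intro frac_le) simp_all
    also have "\<dots> = 2 * K^2 / c / (1 + s) ^ 1"
      using \<open>c > 0\<close> \<open>s \<ge> 0\<close> by (simp add: divide_simps power2_eq_square power3_eq_cube)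
    finally show "\<bar>resolv B s $ i $ j\<bar> \<le> 2 * K^2 / c / (1 + s) ^ 1" .
  qed
qed

definition inv_sqrt_det :: "mat3 \<Rightarrow> real \<Rightarrow> real" where
  "inv_sqrt_det B s = 1 / sqrt (det (B + s *\<^sub>R mat 1))"

lemma decays_inv_sqrt_det:
  assumes "sym_posdef B"
  shows "decays 1 (inv_sqrt_det B)"
proof -
  obtain c where "c > 0" and c: "\<And>s. s \<ge> 0 \<Longrightarrow> c * (1 + s)^3 \<le> det (B + s *\<^sub>R mat 1)"
    using det_shift_growth[OF assms] by blast
  show ?thesis
  proof (rule decaysI)
    fix s :: real assume "s \<ge> 0"
    have "sqrt c * (1 + s) = sqrt (c * (1 + s)^2)"
      using \<open>s \<ge> 0\<close> by (simp add: real_sqrt_mult)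
    also have "\<dots> \<le> sqrt (c * (1 + s)^3)"
      using \<open>c > 0\<close> \<open>s \<ge> 0\<close> by (intro real_sqrt_le_mono mult_left_mono power_increasing) auto
    also have "\<dots> \<le> sqrt (det (B + s *\<^sub>R mat 1))"
      using c[OF \<open>s \<ge> 0\<close>] by (rule real_sqrt_le_mono)
    finally have "sqrt c * (1 + s) \<le> sqrt (det (B + s *\<^sub>R mat 1))" .
    then show "\<bar>inv_sqrt_det B s\<bar> \<le> (1 / sqrt c) / (1 + s) ^ 1"
      using \<open>c > 0\<close> \<open>s \<ge> 0\<close> det_shift_pos[OF assms \<open>s \<ge> 0\<close>]
      by (simp add: inv_sqrt_det_def divide_simps)
  qed
qed

lemma continuous_on_det_shift: "continuous_on S (\<lambda>s. det (B + s *\<^sub>R mat 1 :: mat3))"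
  unfolding det_add_scaleR_mat1 by (intro continuous_intros)

lemma continuous_on_inv_sqrt_det:
  assumes "sym_posdef B"
  shows "continuous_on {0..} (inv_sqrt_det B)"
  unfolding inv_sqrt_det_def using det_shift_pos[OF assms]
  by (intro continuous_intros continuous_on_det_shift) (auto simp: less_imp_neq[symmetric])

lemma continuous_on_resolv_entry:
  assumes "sym_posdef B"
  shows "continuous_on {0..} (\<lambda>s. resolv B s $ i $ j)"
proof -
  have entry: "continuous_on {0..} (\<lambda>s. (B + s *\<^sub>R mat 1 :: mat3) $ a $ b)" for a b
    by (simp add: continuous_intros)
  have "continuous_on {0..} (\<lambda>s. adjugate3 (B + s *\<^sub>R mat 1) $ i $ j / det (B + s *\<^sub>R mat 1))"
    unfolding adjugate3_def vec_lambda_beta using det_shift_pos[OF assms]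
    by (intro continuous_on_divide continuous_on_diff continuous_on_mult entry continuous_on_det_shift)
       (auto simp: less_imp_neq[symmetric])
  then show ?thesis
    by (rule continuous_on_cong[THEN iffD1, rotated 2])
       (simp_all add: resolv_eq_adjugate det_shift_pos[OF assms] less_imp_neq[symmetric])
qed

section \<open>Integration of the pointwise identity\<close>

definition resolv_tensor :: "mat3 \<Rightarrow> real \<Rightarrow> tensor4" where
  "resolv_tensor B s = symm (tprod (resolv B s) (resolv B s))"

lemma decays_resolv_tensor:
  assumes "sym_posdef B"
  shows "decays 2 (\<lambda>s. resolv_tensor B s i j k l)"
proof -
  have prod: "decays 2 (\<lambda>s. resolv B s $ a $ b * resolv B s $ c $ d)" for a b c d
    using decays_mult[OF decays_resolv_entry[OF assms] decays_resolv_entry[OF assms]]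
    by (simp only: one_add_one)
  show ?thesis
    unfolding resolv_tensor_def symm_explicit tprod_def
    by (intro decays_divide_const decays_add prod)
qed

lemma continuous_on_resolv_tensor:
  assumes "sym_posdef B"
  shows "continuous_on {0..} (\<lambda>s. resolv_tensor B s i j k l)"
  unfolding resolv_tensor_def symm_explicit tprod_def
  by (intro continuous_on_divide continuous_on_add continuous_on_mult continuous_on_const
      continuous_on_resolv_entry[OF assms]) simp

lemma contr_resolv_tensor_identity:
  assumes "sym_posdef B" "s \<ge> 0"
  shows "(3/4) *\<^sub>R contr (resolv_tensor B s) (B ** M + transpose M ** B)
    = (1/2) *\<^sub>R (trace M *\<^sub>R resolv B s + M ** resolv B s + resolv B s ** transpose M)
      - (3/2 * s) *\<^sub>R contr (resolv_tensor B s) M"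
proof -
  have tB: "transpose B = B" using assms(1) by (simp add: sym_posdef_def)
  have d: "det (B + s *\<^sub>R mat 1) \<noteq> 0" using det_shift_pos[OF assms] by simp
  show ?thesis
    unfolding resolv_tensor_def
    by (rule contr_symm_tprod_inverse_shift[OF resolv_mul_shift[OF d] shift_mul_resolv[OF d]
          transpose_resolv[OF tB d] tB])
qed

lemma has_integral_matrix_entrywise:
  fixes f :: "'a::euclidean_space \<Rightarrow> real^'n^'m"
  assumes "\<And>i j. ((\<lambda>s. f s $ i $ j) has_integral I $ i $ j) S"
  shows "(f has_integral I) S"
proof (rule has_integral_componentwise)
  fix b :: "real^'n^'m" assume "b \<in> Basis"
  then obtain i j where "b = axis i (axis j 1)"
    by (auto simp: Basis_vec_def)
  then show "((\<lambda>s. f s \<bullet> b) has_integral I \<bullet> b) S"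
    using assms by (simp add: inner_axis)
qed

lemma has_integral_contr:
  assumes "\<And>i j k l. ((\<lambda>s. T s i j k l) has_integral I i j k l) S"
  shows "((\<lambda>s. contr (T s) X) has_integral contr I X) S"
  unfolding contr_def
  by (rule has_integral_matrix_entrywise, simp only: vec_lambda_beta)
     (intro has_integral_sum has_integral_mult_left assms; simp)

lemma has_integral_matrix_mult_left:
  fixes A :: "real^'n^'m" and f :: "'a::euclidean_space \<Rightarrow> real^'p^'n"
  assumes "(f has_integral I) S"
  shows "((\<lambda>s. A ** f s) has_integral A ** I) S"
proof -
  have "bounded_linear (\<lambda>X::real^'p^'n. A ** X)"
    by (simp add: linear_conv_bounded_linear[symmetric] linearI matrix_add_ldistrib matrix_scalar_ac
        scalar_matrix_assoc)
  from has_integral_linear[OF assms this] show ?thesis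
    by (simp add: o_def)
qed

lemma has_integral_matrix_mult_right:
  fixes A :: "real^'p^'n" and f :: "'a::euclidean_space \<Rightarrow> real^'n^'m"
  assumes "(f has_integral I) S"
  shows "((\<lambda>s. f s ** A) has_integral I ** A) S"
proof -
  have "bounded_linear (\<lambda>X::real^'n^'m. X ** A)"
    by (simp add: linear_conv_bounded_linear[symmetric] linearI matrix_add_rdistrib
        flip: scalar_matrix_assoc)
  from has_integral_linear[OF assms this] show ?thesis
    by (simp add: o_def)
qed

lemma has_integral_weighted_resolv_tensor:
  assumes "sym_posdef B" "continuous_on {0..} w" "decays 0 w"
  shows "((\<lambda>s. w s *\<^sub>R contr (resolv_tensor B s) X) has_integral
    contr (\<lambda>i j k l. integral {0..} (\<lambda>s. w s * resolv_tensor B s i j k l)) X) {0..}"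
proof -
  have "((\<lambda>s. w s * resolv_tensor B s i j k l) has_integral
      integral {0..} (\<lambda>s. w s * resolv_tensor B s i j k l)) {0..}" for i j k l
    using decays_mult[OF assms(3) decays_resolv_tensor[OF assms(1)], unfolded add_0]
    by (intro integrable_integral integrable_on_decays continuous_on_mult assms(2)
        continuous_on_resolv_tensor[OF assms(1)])
  from has_integral_contr[OF this] show ?thesis
    by (simp add: contr_scale)
qed

lemma has_integral_contr_CC:
  assumes "sym_posdef B"
  shows "((\<lambda>s. inv_sqrt_det B s *\<^sub>R contr (resolv_tensor B s) X) has_integral
    (4/3) *\<^sub>R contr (CC B) X) {0..}"
proof -
  have CC: "CC B = (\<lambda>i j k l.
      3/4 * integral {0..} (\<lambda>s. inv_sqrt_det B s * resolv_tensor B s i j k l))"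
    by (simp add: fun_eq_iff CC_def inv_sqrt_det_def resolv_tensor_def)
  show ?thesis
    unfolding CC contr_scale
    using has_integral_weighted_resolv_tensor[OF assms continuous_on_inv_sqrt_det[OF assms]
      decays_mono[OF _ decays_inv_sqrt_det[OF assms]]]
    by simp
qed

lemma has_integral_contr_AA:
  assumes "sym_posdef B"
  shows "((\<lambda>s. (s * inv_sqrt_det B s) *\<^sub>R contr (resolv_tensor B s) X) has_integral
    (4/3) *\<^sub>R contr (AA B) X) {0..}"
proof -
  have AA: "AA B = (\<lambda>i j k l.
      3/4 * integral {0..} (\<lambda>s. s * inv_sqrt_det B s * resolv_tensor B s i j k l))"
    by (simp add: fun_eq_iff AA_def inv_sqrt_det_def resolv_tensor_def)
  show ?thesis
    unfolding AA contr_scale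
    using has_integral_weighted_resolv_tensor[OF assms
      continuous_on_mult[OF continuous_on_id continuous_on_inv_sqrt_det[OF assms]]
      decays_mult_ident[OF decays_inv_sqrt_det[OF assms, unfolded One_nat_def]]]
    by simp
qed

lemma has_integral_Amat:
  assumes "sym_posdef B"
  shows "((\<lambda>s. inv_sqrt_det B s *\<^sub>R resolv B s) has_integral 2 *\<^sub>R Amat B) {0..}"
proof -
  have "((\<lambda>s. inv_sqrt_det B s * resolv B s $ i $ j) has_integral
      integral {0..} (\<lambda>s. inv_sqrt_det B s * resolv B s $ i $ j)) {0..}" for i j
    using decays_mult[OF decays_inv_sqrt_det[OF assms] decays_resolv_entry[OF assms], unfolded one_add_one]
    by (intro integrable_integral integrable_on_decays continuous_on_mult
        continuous_on_inv_sqrt_det[OF assms] continuous_on_resolv_entry[OF assms])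
  then have "((\<lambda>s. inv_sqrt_det B s *\<^sub>R resolv B s) has_integral
      (\<chi> i j. integral {0..} (\<lambda>s. inv_sqrt_det B s * resolv B s $ i $ j))) {0..}"
    by (intro has_integral_matrix_entrywise) simp
  moreover from integral_unique[OF this] have
    "2 *\<^sub>R Amat B = (\<chi> i j. integral {0..} (\<lambda>s. inv_sqrt_det B s * resolv B s $ i $ j))"
    by (simp add: Amat_def inv_sqrt_det_def)
  ultimately show ?thesis by simp
qed

lemma has_integral_Amat_AA_combination:
  assumes "sym_posdef B"
  shows "((\<lambda>s. (1/2) *\<^sub>R (trace M *\<^sub>R (inv_sqrt_det B s *\<^sub>R resolv B s)
      + M ** (inv_sqrt_det B s *\<^sub>R resolv B s) + (inv_sqrt_det B s *\<^sub>R resolv B s) ** transpose M)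
      - (3/2) *\<^sub>R ((s * inv_sqrt_det B s) *\<^sub>R contr (resolv_tensor B s) M)) has_integral
    trace M *\<^sub>R Amat B + M ** Amat B + Amat B ** transpose M - 2 *\<^sub>R contr (AA B) M) {0..}"
proof -
  have total: "(1/2) *\<^sub>R (trace M *\<^sub>R (2 *\<^sub>R Amat B) + M ** (2 *\<^sub>R Amat B)
      + (2 *\<^sub>R Amat B) ** transpose M) - (3/2) *\<^sub>R ((4/3) *\<^sub>R contr (AA B) M)
    = trace M *\<^sub>R Amat B + M ** Amat B + Amat B ** transpose M - 2 *\<^sub>R contr (AA B) M"
    by (simp add: matrix_scalar_ac scaleR_add_right flip: scalar_matrix_assoc)
  show ?thesis
    unfolding total[symmetric] using has_integral_Amat[OF assms] has_integral_contr_AA[OF assms]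
    by (intro has_integral_diff has_integral_cmul has_integral_add has_integral_matrix_mult_left
        has_integral_matrix_mult_right)
qed

theorem mainTheorem4:
  fixes B M :: "real^3^3"
  assumes "sym_posdef B"
  shows "contr (CC B) (B ** M + transpose M ** B)
    = trace M *\<^sub>R Amat B + M ** Amat B + Amat B ** transpose M - 2 *\<^sub>R contr (AA B) M"
proof -
  let ?X = "B ** M + transpose M ** B"
  let ?integrand = "\<lambda>s. (3/4) *\<^sub>R (inv_sqrt_det B s *\<^sub>R contr (resolv_tensor B s) ?X)"
  have lhs: "(?integrand has_integral contr (CC B) ?X) {0..}"
    using has_integral_cmul[OF has_integral_contr_CC[OF assms], of "3/4"] by simp
  have rhs: "(?integrand has_integral
      trace M *\<^sub>R Amat B + M ** Amat B + Amat B ** transpose M - 2 *\<^sub>R contr (AA B) M) {0..}"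
  proof (rule has_integral_eq[OF _ has_integral_Amat_AA_combination[OF assms]])
    fix s :: real assume "s \<in> {0..}"
    then show "(1/2) *\<^sub>R (trace M *\<^sub>R (inv_sqrt_det B s *\<^sub>R resolv B s)
        + M ** (inv_sqrt_det B s *\<^sub>R resolv B s) + (inv_sqrt_det B s *\<^sub>R resolv B s) ** transpose M)
        - (3/2) *\<^sub>R ((s * inv_sqrt_det B s) *\<^sub>R contr (resolv_tensor B s) M) = ?integrand s"
      using arg_cong[OF contr_resolv_tensor_identity[OF assms, of s M], of "scaleR (inv_sqrt_det B s)"]
      by (simp add: algebra_simps matrix_scalar_ac scalar_matrix_assoc)
  qed
  show ?thesis
    using lhs rhs by (rule has_integral_unique)
qed

end
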